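(* Let $\beta>0$ and let $V\in\mathbb R^{d\times d}$ be real symmetric with orthonormal eigenbasis $(e_k)_{k=1}^d$ and eigenvalues $(\lambda_k)$ satisfying $\lambda_1>\max_{k\ge2}|\lambda_k|$. Let $x_i(t)\in\mathbb S^{d-1}$, $i\in[n]$, solve \[ \dot x_i=P^\perp_{x_i}\Big(\frac1{Z_i}\sum_{j=1}^n e^{\beta\langle x_i,Vx_j\rangle}Vx_j\Big),\qquad Z_i=\sum_{k=1}^n e^{\beta\langle x_i,Vx_k\rangle}, \] and write $c_{i,k}(t)=\langle x_i(t),e_k\rangle$. If there is $\delta>0$ with $c_{i,1}(0)\le-\delta$ for all $i\in[n]$, then $x_i(t)\to-e_1$ as $t\to\infty$ for all $i\in[n]$.
   Context: $P^\perp_xy=y-\langle x,y\rangle x$ denotes the orthogonal projection onto $T_x\mathbb S^{d-1}$. *)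

theory Defs
  imports "HOL-Analysis.Analysis"
begin

definition proj_perp :: "real ^ 'd \<Rightarrow> real ^ 'd \<Rightarrow> real ^ 'd" where
  "proj_perp x y = y - (x \<bullet> y) *\<^sub>R x"

definition attn_Z :: "real \<Rightarrow> real ^ 'd ^ 'd \<Rightarrow> ('n::finite \<Rightarrow> real ^ 'd) \<Rightarrow> 'n \<Rightarrow> real" where
  "attn_Z \<beta> V X i = (\<Sum>k\<in>UNIV. exp (\<beta> * (X i \<bullet> (V *v X k))))"

definition attn_field :: "real \<Rightarrow> real ^ 'd ^ 'd \<Rightarrow> ('n::finite \<Rightarrow> real ^ 'd) \<Rightarrow> 'n \<Rightarrow> real ^ 'd" where
  "attn_field \<beta> V X i = proj_perp (X i)
     ((1 / attn_Z \<beta> V X i) *\<^sub>R (\<Sum>j\<in>UNIV. exp (\<beta> * (X i \<bullet> (V *v X j))) *\<^sub>R (V *v X j)))"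

end

theory Submission
  imports Defs
begin

text \<open>
  Put \<open>p\<^sub>i = -\<langle>x\<^sub>i, e\<^sub>1\<rangle>\<close> and \<open>\<kappa> = \<lambda>\<^sub>1 - max\<^sub>k\<^sub>\<ge>\<^sub>2 |\<lambda>\<^sub>k|\<close>. If \<open>p\<^sub>i\<close> is a smallest of the
  \<open>p\<^sub>j\<close> and nonnegative, then \<open>p\<^sub>i' \<ge> \<kappa> p\<^sub>i (1 - p\<^sub>i\<^sup>2)\<close>: the field is a softmax average over
  \<open>j\<close>, and splitting \<open>x\<^sub>i, x\<^sub>j\<close> along \<open>e\<^sub>1\<close> and \<open>e\<^sub>1\<^sup>\<bottom>\<close> each summand has this lower bound,
  because \<open>V\<close> contracts \<open>e\<^sub>1\<^sup>\<bottom>\<close> by \<open>\<lambda>\<^sub>1 - \<kappa>\<close> and \<open>|x\<^sub>j\<^sup>\<bottom>| \<le> |x\<^sub>i\<^sup>\<bottom>|\<close>.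
  A first-touching-time argument against linear barriers then shows that \<open>min\<^sub>i p\<^sub>i\<close>
  eventually exceeds every level below 1, so \<open>p\<^sub>i \<rightarrow> 1\<close>, which on the sphere means
  \<open>x\<^sub>i \<rightarrow> -e\<^sub>1\<close>.
\<close>

lemma inner_matrix_vector_symmetric:
  fixes V :: "real ^ 'n ^ 'n"
  assumes "transpose V = V"
  shows "x \<bullet> (V *v y) = (V *v x) \<bullet> y"
  by (metis assms dot_lmul_matrix transpose_matrix_vector)

lemma orthonormal_family_span_UNIV:
  fixes e :: "'n \<Rightarrow> real ^ 'n"
  assumes orth: "\<And>k l. e k \<bullet> e l = (if k = l then 1 else 0)"
  shows "inj e" and "span (range e) = UNIV"
proof -
  show inj: "inj e"
    by (rule injI) (metis orth zero_neq_one)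
  have indep: "independent (range e)"
  proof (rule pairwise_orthogonal_independent)
    show "pairwise orthogonal (range e)"
      using orth by (auto simp: pairwise_def orthogonal_def)
    show "0 \<notin> range e"
      using orth by (metis imageE inner_zero_left zero_neq_one)
  qed
  have "UNIV \<subseteq> span (range e)"
    by (rule card_ge_dim_independent) (use indep inj in \<open>auto simp: card_image\<close>)
  then show "span (range e) = UNIV"
    by blast
qed

lemma orthonormal_family_expand:
  fixes e :: "'n \<Rightarrow> real ^ 'n"
  assumes orth: "\<And>k l. e k \<bullet> e l = (if k = l then 1 else 0)"
  shows "(\<Sum>k\<in>UNIV. (z \<bullet> e k) *\<^sub>R e k) = z"
proof -
  have "(\<Sum>b\<in>range e. (z \<bullet> b) *\<^sub>R b) = z"
    by (rule orthonormal_basis_expand)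
       (use orth orthonormal_family_span_UNIV[OF orth]
         in \<open>auto simp: pairwise_def orthogonal_def norm_eq_sqrt_inner\<close>)
  then show ?thesis
    by (simp add: sum.reindex orthonormal_family_span_UNIV(1)[OF orth])
qed

lemma inner_sum_orthonormal:
  fixes e :: "'n \<Rightarrow> real ^ 'n"
  assumes orth: "\<And>k l. e k \<bullet> e l = (if k = l then 1 else 0)"
  shows "(\<Sum>k\<in>UNIV. a k *\<^sub>R e k) \<bullet> (\<Sum>k\<in>UNIV. b k *\<^sub>R e k) = (\<Sum>k\<in>UNIV. a k * b k)"
  by (simp add: inner_sum_left inner_sum_right orth if_distrib cong: if_cong) (simp add: mult.commute)

lemma norm_matrix_vector_orthogonal_eigen_le:
  fixes e :: "'n \<Rightarrow> real ^ 'n" and V :: "real ^ 'n ^ 'n"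
  assumes orth: "\<And>k l. e k \<bullet> e l = (if k = l then 1 else 0)"
    and eigen: "\<And>k. V *v e k = lam k *\<^sub>R e k"
    and bound: "\<And>k. k \<noteq> k1 \<Longrightarrow> \<bar>lam k\<bar> \<le> \<mu>"
    and z: "z \<bullet> e k1 = 0"
  shows "norm (V *v z) \<le> \<mu> * norm z"
proof (cases "z = 0")
  case False
  define c where "c k = z \<bullet> e k" for k
  have z_expand: "z = (\<Sum>k\<in>UNIV. c k *\<^sub>R e k)"
    unfolding c_def by (rule orthonormal_family_expand[OF orth, symmetric])
  have Vz: "V *v z = (\<Sum>k\<in>UNIV. (lam k * c k) *\<^sub>R e k)"
    by (subst z_expand)
       (simp add: linear_sum[OF matrix_vector_mul_linear] matrix_vector_mult_scaleR eigen o_def mult.commute)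
  have "\<exists>k. c k \<noteq> 0"
  proof (rule ccontr)
    assume "\<nexists>k. c k \<noteq> 0"
    then have "z = 0"
      by (subst z_expand) simp
    then show False
      using False by contradiction
  qed
  then obtain k where "c k \<noteq> 0" "k \<noteq> k1"
    using z by (auto simp: c_def)
  then have \<mu>_nonneg: "0 \<le> \<mu>"
    using bound by force
  have "(norm (V *v z))\<^sup>2 = (\<Sum>k\<in>UNIV. (lam k * c k)\<^sup>2)"
    unfolding power2_norm_eq_inner Vz inner_sum_orthonormal[OF orth] by (simp add: power2_eq_square)
  also have "\<dots> \<le> (\<Sum>k\<in>UNIV. \<mu>\<^sup>2 * (c k)\<^sup>2)"
  proof (rule sum_mono)
    fix k
    show "(lam k * c k)\<^sup>2 \<le> \<mu>\<^sup>2 * (c k)\<^sup>2"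
    proof (cases "k = k1")
      case False
      then have "(lam k)\<^sup>2 \<le> \<mu>\<^sup>2"
        using bound by (metis abs_ge_zero power2_abs power_mono)
      then show ?thesis
        by (simp add: power_mult_distrib mult_right_mono)
    qed (simp add: c_def z)
  qed
  also have "\<dots> = (\<mu> * norm z)\<^sup>2"
  proof -
    have "(norm z)\<^sup>2 = (\<Sum>k\<in>UNIV. c k *\<^sub>R e k) \<bullet> (\<Sum>k\<in>UNIV. c k *\<^sub>R e k)"
      by (metis z_expand power2_norm_eq_inner)
    also have "\<dots> = (\<Sum>k\<in>UNIV. (c k)\<^sup>2)"
      by (simp add: inner_sum_orthonormal[OF orth] power2_eq_square)
    finally show ?thesis
      by (simp add: power_mult_distrib sum_distrib_left)
  qed
  finally show ?thesis
    using \<mu>_nonneg by (simp add: power2_le_iff_abs_le)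
qed simp

lemma norm_orthogonal_part_squared:
  fixes u x :: "'a::real_inner"
  assumes "u \<bullet> u = 1"
  shows "(norm (x - (x \<bullet> u) *\<^sub>R u))\<^sup>2 = (norm x)\<^sup>2 - (x \<bullet> u)\<^sup>2"
  unfolding power2_norm_eq_inner using assms
  by (simp add: inner_diff_left inner_diff_right inner_commute power2_eq_square)

lemma inner_matrix_vector_eigen_split:
  fixes V :: "real ^ 'n ^ 'n" and u x y :: "real ^ 'n"
  assumes sym: "transpose V = V" and u: "u \<bullet> u = 1" and eigen: "V *v u = l *\<^sub>R u"
  shows "x \<bullet> (V *v y) = l * (x \<bullet> u) * (y \<bullet> u)
           + (x - (x \<bullet> u) *\<^sub>R u) \<bullet> (V *v (y - (y \<bullet> u) *\<^sub>R u))"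
  using inner_matrix_vector_symmetric[OF sym, of u] u
  by (simp add: matrix_vector_mult_diff_distrib matrix_vector_mult_scaleR eigen
      inner_diff_left inner_diff_right inner_commute algebra_simps)

lemma alignment_gain_ge:
  fixes V :: "real ^ 'n ^ 'n" and u x y :: "real ^ 'n"
  assumes sym: "transpose V = V"
    and u: "u \<bullet> u = 1" and eigen: "V *v u = l *\<^sub>R u"
    and gap: "\<And>z. z \<bullet> u = 0 \<Longrightarrow> norm (V *v z) \<le> \<mu> * norm z" and \<mu>_le: "\<mu> \<le> l"
    and x: "norm x = 1" and y: "norm y = 1"
    and x_nonpos: "x \<bullet> u \<le> 0" and yx: "y \<bullet> u \<le> x \<bullet> u"
  shows "(l - \<mu>) * (- (x \<bullet> u)) * (1 - (x \<bullet> u)\<^sup>2)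
           \<le> l * (- (y \<bullet> u)) - (x \<bullet> (V *v y)) * (- (x \<bullet> u))"
proof -
  define a where "a = x \<bullet> u"
  define b where "b = y \<bullet> u"
  define x' where "x' = x - a *\<^sub>R u"
  define y' where "y' = y - b *\<^sub>R u"
  define r where "r = x' \<bullet> (V *v y')"
  have x'u: "x' \<bullet> u = 0" and y'u: "y' \<bullet> u = 0"
    using u by (simp_all add: x'_def y'_def a_def b_def inner_diff_left)
  have split: "x \<bullet> (V *v y) = l * a * b + r"
    unfolding r_def x'_def y'_def a_def b_def by (rule inner_matrix_vector_eigen_split[OF sym u eigen])
  have x'_norm: "(norm x')\<^sup>2 = 1 - a\<^sup>2" and y'_norm: "(norm y')\<^sup>2 = 1 - b\<^sup>2"
    using norm_orthogonal_part_squared[OF u] x y by (simp_all add: x'_def y'_def a_def b_def)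
  have r_bound: "\<bar>r\<bar> \<le> norm x' * (\<mu> * norm y')"
    using Cauchy_Schwarz_ineq2[of x' "V *v y'"] mult_left_mono[OF gap[OF y'u] norm_ge_zero, of x']
    by (simp add: r_def)
  have "l * (- b) - (x \<bullet> (V *v y)) * (- a) = l * (- b) * (norm x')\<^sup>2 + r * a"
    unfolding split x'_norm by (simp add: algebra_simps power2_eq_square)
  moreover have "(l - \<mu>) * (- a) * (norm x')\<^sup>2 \<le> l * (- b) * (norm x')\<^sup>2 + r * a"
  proof (cases "x' = 0")
    case True
    then show ?thesis
      by (simp add: r_def)
  next
    case False
    have "0 \<le> \<mu> * norm x'"
      using gap[OF x'u] norm_ge_zero order_trans by blast
    then have "0 \<le> \<mu>"
      using False by (simp add: zero_le_mult_iff)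
    have "(- a)\<^sup>2 \<le> (- b)\<^sup>2"
      using x_nonpos yx by (intro power_mono) (auto simp: a_def b_def)
    then have "(norm y')\<^sup>2 \<le> (norm x')\<^sup>2"
      using x'_norm y'_norm by simp
    then have "norm y' \<le> norm x'"
      by (rule power2_le_imp_le) simp
    have "- (r * a) \<le> \<bar>r\<bar> * (- a)"
      using mult_right_mono[OF abs_ge_self, of "- a" r] x_nonpos by (simp add: a_def)
    also have "\<dots> \<le> norm x' * (\<mu> * norm y') * (- a)"
      using mult_right_mono[OF r_bound, of "- a"] x_nonpos by (simp add: a_def)
    also have "\<dots> \<le> norm x' * (\<mu> * norm x') * (- a)"
      using x_nonpos \<open>0 \<le> \<mu>\<close> \<open>norm y' \<le> norm x'\<close>
      by (intro mult_right_mono mult_left_mono) (auto simp: a_def)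
    finally have "- (r * a) \<le> \<mu> * (- a) * (norm x')\<^sup>2"
      by (simp add: algebra_simps power2_eq_square)
    moreover have "l * (- a) * (norm x')\<^sup>2 \<le> l * (- b) * (norm x')\<^sup>2"
      using \<open>0 \<le> \<mu>\<close> \<mu>_le yx by (intro mult_right_mono mult_left_mono) (auto simp: a_def b_def)
    ultimately show ?thesis
      by (simp add: algebra_simps)
  qed
  ultimately show ?thesis
    by (simp add: a_def b_def x'_norm)
qed

lemma attn_field_inner_eigenvector:
  fixes V :: "real ^ 'd ^ 'd" and X :: "'n::finite \<Rightarrow> real ^ 'd"
  assumes sym: "transpose V = V" and eigen: "V *v u = l *\<^sub>R u"
  shows "- (attn_field \<beta> V X i \<bullet> u) = (1 / attn_Z \<beta> V X i) *
     (\<Sum>j\<in>UNIV. exp (\<beta> * (X i \<bullet> (V *v X j))) *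
        (l * (- (X j \<bullet> u)) - (X i \<bullet> (V *v X j)) * (- (X i \<bullet> u))))"
proof -
  have "(V *v X j) \<bullet> u = l * (X j \<bullet> u)" for j
    using inner_matrix_vector_symmetric[OF sym, of "X j" u] eigen by (simp add: inner_commute)
  then show ?thesis
    unfolding attn_field_def proj_perp_def
    by (simp add: inner_diff_left inner_sum_left inner_sum_right sum_distrib_left
        sum_distrib_right sum_subtractf algebra_simps)
qed

lemma attn_field_alignment_ge:
  fixes V :: "real ^ 'd ^ 'd" and X :: "'n::finite \<Rightarrow> real ^ 'd"
  assumes sym: "transpose V = V"
    and u: "u \<bullet> u = 1" and eigen: "V *v u = l *\<^sub>R u"
    and gap: "\<And>z. z \<bullet> u = 0 \<Longrightarrow> norm (V *v z) \<le> \<mu> * norm z" and \<mu>_le: "\<mu> \<le> l"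
    and sphere: "\<And>j. norm (X j) = 1"
    and nonpos: "X i \<bullet> u \<le> 0" and extremal: "\<And>j. X j \<bullet> u \<le> X i \<bullet> u"
  shows "(l - \<mu>) * (- (X i \<bullet> u)) * (1 - (X i \<bullet> u)\<^sup>2) \<le> - (attn_field \<beta> V X i \<bullet> u)"
proof -
  define w where "w j = exp (\<beta> * (X i \<bullet> (V *v X j)))" for j
  define g where "g j = l * (- (X j \<bullet> u)) - (X i \<bullet> (V *v X j)) * (- (X i \<bullet> u))" for j
  define K where "K = (l - \<mu>) * (- (X i \<bullet> u)) * (1 - (X i \<bullet> u)\<^sup>2)"
  have "(\<Sum>j\<in>UNIV. w j) * K \<le> (\<Sum>j\<in>UNIV. w j * g j)"
    unfolding sum_distrib_right
  proof (rule sum_mono)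
    fix j
    have "K \<le> g j"
      unfolding K_def g_def
      by (rule alignment_gain_ge[OF sym u eigen gap \<mu>_le sphere sphere nonpos extremal])
    then show "w j * K \<le> w j * g j"
      by (simp add: w_def)
  qed
  moreover have "0 < (\<Sum>j\<in>UNIV. w j)"
    by (rule sum_pos) (auto simp: w_def)
  ultimately have "K \<le> (1 / (\<Sum>j\<in>UNIV. w j)) * (\<Sum>j\<in>UNIV. w j * g j)"
    by (simp add: field_simps)
  then show ?thesis
    by (simp add: attn_field_inner_eigenvector[OF sym eigen] attn_Z_def K_def w_def g_def)
qed

lemma first_zero_of_finite_family:
  fixes g :: "'n::finite \<Rightarrow> real \<Rightarrow> real"
  assumes cont: "\<And>i. continuous_on {a..b} (g i)" and start: "\<And>i. 0 < g i a"
    and hit: "t1 \<in> {a..b}" "g i1 t1 \<le> 0"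
  obtains t i where "a < t" "t \<le> b" "g i t = 0" "\<And>j. 0 \<le> g j t"
    "\<And>j s. a \<le> s \<Longrightarrow> s < t \<Longrightarrow> 0 < g j s"
proof -
  have closed_level: "closed {s\<in>{a..b}. g i s \<in> T}" if "closed T" for i T
    using continuous_closed_preimage[OF cont closed_atLeastAtMost that]
    by (simp add: vimage_def Int_def)
  define S where "S = (\<Union>i. {s\<in>{a..b}. g i s \<in> {..0}})"
  have "S \<noteq> {}" and bdd: "bdd_below S"
    using hit by (auto simp: S_def bdd_below_def)
  moreover have "closed S"
    unfolding S_def by (intro closed_UN) (use closed_level[of "{..0}"] in auto)
  ultimately have "Inf S \<in> S"
    by (rule closed_contains_Inf)
  define t where "t = Inf S"
  then obtain i where t: "a \<le> t" "t \<le> b" "g i t \<le> 0"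
    using \<open>Inf S \<in> S\<close> by (auto simp: S_def)
  have "a < t"
    using t start[of i] by (cases "a = t") auto
  have before: "0 < g j s" if "a \<le> s" "s < t" for j s
  proof (rule ccontr)
    assume "\<not> 0 < g j s"
    then have "s \<in> S"
      using that t by (auto simp: S_def not_less)
    then have "t \<le> s"
      unfolding t_def by (rule cInf_lower[OF _ bdd])
    then show False
      using that(2) by simp
  qed
  have at_t: "0 \<le> g j t" for j
  proof -
    have "closed {s\<in>{a..b}. 0 \<le> g j s}"
      using closed_level[of "{0..}" j] by simp
    moreover have "{a..<t} \<subseteq> {s\<in>{a..b}. 0 \<le> g j s}"
      using before t by (auto intro: less_imp_le)
    ultimately have "closure {a..<t} \<subseteq> {s\<in>{a..b}. 0 \<le> g j s}"
      by (rule closure_minimal[rotated])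
    moreover have "t \<in> closure {a..<t}"
      using \<open>a < t\<close> by simp
    ultimately show ?thesis
      by auto
  qed
  have "g i t = 0"
    using t(3) at_t[of i] by linarith
  with \<open>a < t\<close> t(2) at_t before show ?thesis
    by (intro that) auto
qed

lemma finite_family_stays_above_barrier:
  fixes f :: "'n::finite \<Rightarrow> real \<Rightarrow> real" and h :: "real \<Rightarrow> real"
  assumes cont_f: "\<And>i. continuous_on {a..b} (f i)" and cont_h: "continuous_on {a..b} h"
    and deriv_f: "\<And>i t. a < t \<Longrightarrow> t \<le> b \<Longrightarrow> (f i has_real_derivative D i t) (at t)"
    and deriv_h: "\<And>t. a < t \<Longrightarrow> t \<le> b \<Longrightarrow> (h has_real_derivative Dh t) (at t)"
    and start: "\<And>i. h a < f i a"
    and touch: "\<And>i t. a < t \<Longrightarrow> t \<le> b \<Longrightarrow> f i t = h t \<Longrightarrow> (\<forall>j. h t \<le> f j t) \<Longrightarrow> Dh t < D i t"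
  shows "\<forall>i. \<forall>t\<in>{a..b}. h t < f i t"
proof (rule ccontr)
  assume "\<not> ?thesis"
  then obtain t1 i1 where hit: "t1 \<in> {a..b}" "f i1 t1 - h t1 \<le> 0"
    by (auto simp: not_less)
  obtain t i where t: "a < t" "t \<le> b" "f i t - h t = 0" "\<And>j. 0 \<le> f j t - h t"
    and before: "\<And>j s. a \<le> s \<Longrightarrow> s < t \<Longrightarrow> 0 < f j s - h s"
  proof (rule first_zero_of_finite_family[where g = "\<lambda>i s. f i s - h s", OF _ _ hit])
    show "continuous_on {a..b} (\<lambda>s. f i s - h s)" for i
      by (intro continuous_on_diff cont_f cont_h)
    show "0 < f i a - h a" for i
      using start by simp
  qed (rule that)
  have "((\<lambda>s. f i s - h s) has_real_derivative D i t - Dh t) (at t)"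
    by (intro derivative_intros deriv_f deriv_h t(1,2))
  moreover have "0 < D i t - Dh t"
    using touch[OF t(1,2)] t(3,4) by simp
  ultimately obtain d where "0 < d"
    and d: "\<And>k. 0 < k \<Longrightarrow> k < d \<Longrightarrow> f i (t - k) - h (t - k) < f i t - h t"
    using DERIV_pos_inc_left by blast
  define k where "k = min (d/2) ((t - a)/2)"
  have "f i (t - k) - h (t - k) < 0"
    using d[of k] \<open>0 < d\<close> t(1,3) by (simp add: k_def)
  moreover have "0 < f i (t - k) - h (t - k)"
    using \<open>0 < d\<close> t(1) by (intro before) (auto simp: k_def min_def field_simps)
  ultimately show False
    by simp
qed

context
  fixes p D :: "'n::finite \<Rightarrow> real \<Rightarrow> real" and \<kappa> :: real
  assumes \<kappa>_pos: "0 < \<kappa>"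
    and cont: "\<And>i. continuous_on {0..} (p i)"
    and deriv: "\<And>i t. 0 < t \<Longrightarrow> (p i has_real_derivative D i t) (at t)"
    and growth: "\<And>i t. 0 < t \<Longrightarrow> 0 \<le> p i t \<Longrightarrow> (\<And>j. p i t \<le> p j t) \<Longrightarrow>
                   \<kappa> * p i t * (1 - (p i t)\<^sup>2) \<le> D i t"
begin

lemma logistic_min_above_line:
  assumes "0 \<le> t0" "t0 \<le> T" "0 < c" "0 \<le> \<rho>"
    and below_one: "c + \<rho> * (T - t0) < 1"
    and slope: "\<rho> < \<kappa> * c * (1 - (c + \<rho> * (T - t0))\<^sup>2)"
    and start: "\<And>i. c < p i t0"
  shows "c + \<rho> * (T - t0) < p i T"
proof -
  have "\<forall>i. \<forall>t\<in>{t0..T}. c + \<rho> * (t - t0) < p i t"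
  proof (rule finite_family_stays_above_barrier[where D = D and Dh = "\<lambda>_. \<rho>"])
    show "continuous_on {t0..T} (p i)" for i
      using cont by (rule continuous_on_subset) (use \<open>0 \<le> t0\<close> in auto)
    show "((\<lambda>t. c + \<rho> * (t - t0)) has_real_derivative \<rho>) (at t)" for t
      by (auto intro!: derivative_eq_intros)
    show "continuous_on {t0..T} (\<lambda>t. c + \<rho> * (t - t0))"
      by (intro continuous_intros)
    fix i t
    assume t: "t0 < t" "t \<le> T" and touching: "p i t = c + \<rho> * (t - t0)"
      and above: "\<forall>j. c + \<rho> * (t - t0) \<le> p j t"
    define h where "h = c + \<rho> * (t - t0)"
    define H where "H = c + \<rho> * (T - t0)"
    have "c \<le> h" "h \<le> H"
      using \<open>0 \<le> \<rho>\<close> t by (simp_all add: h_def H_def mult_left_mono)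
    have "\<kappa> * h * (1 - h\<^sup>2) \<le> D i t"
      using growth[of t i] t \<open>0 \<le> t0\<close> touching above \<open>0 < c\<close> \<open>c \<le> h\<close>
      by (simp add: h_def)
    moreover have "\<kappa> * c * (1 - H\<^sup>2) \<le> \<kappa> * h * (1 - h\<^sup>2)"
    proof -
      have "h\<^sup>2 \<le> H\<^sup>2"
        using \<open>c \<le> h\<close> \<open>h \<le> H\<close> \<open>0 < c\<close> by (intro power_mono) auto
      moreover have "H\<^sup>2 \<le> 1"
        using below_one \<open>c \<le> h\<close> \<open>h \<le> H\<close> \<open>0 < c\<close> by (simp add: H_def abs_square_le_1)
      ultimately show ?thesis
        using \<kappa>_pos \<open>0 < c\<close> \<open>c \<le> h\<close> by (intro mult_mono) auto
    qed
    ultimately show "\<rho> < D i t"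
      using slope by (simp add: H_def)
  qed (use deriv \<open>0 \<le> t0\<close> start in auto)
  then show ?thesis
    using \<open>t0 \<le> T\<close> by auto
qed

lemma logistic_min_stays_above:
  assumes "0 \<le> t0" "t0 \<le> t" "0 < c" "c < 1" "\<And>i. c < p i t0"
  shows "c < p i t"
  using logistic_min_above_line[of t0 t c 0] assms \<kappa>_pos by (simp add: abs_square_less_1)

lemma logistic_min_eventually_above:
  assumes init: "\<And>i. 0 < p i 0" and "L < 1"
  shows "\<forall>\<^sub>F t in at_top. L < p i t"
proof -
  define m where "m = Min (insert 1 (range (\<lambda>i. p i 0)))"
  have "0 < m"
    using init by (simp add: m_def Min_gr_iff)
  have "m \<le> 1" "m \<le> p i 0" for i
    unfolding m_def by (rule Min_le; simp)+
  define c where "c = m / 2"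
  have "0 < c" "c < 1"
    using \<open>0 < m\<close> \<open>m \<le> 1\<close> by (simp_all add: c_def)
  have c_below: "c < p i 0" for i
    using \<open>0 < m\<close> \<open>m \<le> p i 0\<close> by (simp add: c_def)
  define L' where "L' = max L c"
  define \<rho> where "\<rho> = \<kappa> * c * (1 - L'\<^sup>2) / 2"
  define T where "T = (L' - c) / \<rho>"
  have "0 < L'" "L' < 1"
    using \<open>0 < c\<close> \<open>c < 1\<close> \<open>L < 1\<close> by (auto simp: L'_def)
  then have "0 < \<rho>"
    using \<kappa>_pos \<open>0 < c\<close> by (simp add: \<rho>_def abs_square_less_1)
  then have "0 \<le> T" and line_end: "c + \<rho> * (T - 0) = L'"
    by (simp_all add: T_def L'_def)
  have "L' < p j T" for j
    using logistic_min_above_line[of 0 T c \<rho> j] \<open>0 < c\<close> \<open>0 < \<rho>\<close> \<open>0 \<le> T\<close> c_below \<open>L' < 1\<close>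
    unfolding line_end by (simp add: \<rho>_def)
  then have "L' < p i t" if "T \<le> t" for t
    using logistic_min_stays_above[OF \<open>0 \<le> T\<close> that \<open>0 < L'\<close> \<open>L' < 1\<close>] by blast
  moreover have "L \<le> L'"
    by (simp add: L'_def)
  ultimately show ?thesis
    unfolding eventually_at_top_linorder by (meson order_le_less_trans)
qed

end

lemma tendsto_unit_if_inner_tendsto_one:
  fixes x :: "'a \<Rightarrow> 'b::real_inner"
  assumes sphere: "\<forall>\<^sub>F t in F. norm (x t) = 1" and u: "norm u = 1"
    and inner: "((\<lambda>t. x t \<bullet> u) \<longlongrightarrow> 1) F"
  shows "(x \<longlongrightarrow> u) F"
proof -
  have "\<forall>\<^sub>F t in F. sqrt (2 - 2 * (x t \<bullet> u)) = norm (x t - u)"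
    using sphere
  proof eventually_elim
    case (elim t)
    have "(norm (x t - u))\<^sup>2 = 2 - 2 * (x t \<bullet> u)"
      using elim u
      by (simp add: power2_norm_eq_inner inner_diff_left inner_diff_right inner_commute norm_eq_1)
    then show ?case
      by (rule real_sqrt_unique) simp
  qed
  moreover have "((\<lambda>t. sqrt (2 - 2 * (x t \<bullet> u))) \<longlongrightarrow> 0) F"
    using tendsto_real_sqrt[OF tendsto_diff[OF tendsto_const tendsto_mult[OF tendsto_const inner]],
        of 2 2]
    by simp
  ultimately have "((\<lambda>t. norm (x t - u)) \<longlongrightarrow> 0) F"
    by (rule Lim_transform_eventually[rotated])
  then show ?thesis
    by (simp add: tendsto_norm_zero_iff Lim_null[of x u])
qed

lemma attn_flow_aligns_with_top_eigenvector:
  fixes V :: "real ^ 'd ^ 'd" and x :: "'n::finite \<Rightarrow> real \<Rightarrow> real ^ 'd"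
  assumes sym: "transpose V = V"
    and u: "u \<bullet> u = 1" and eigen: "V *v u = l *\<^sub>R u"
    and gap: "\<And>z. z \<bullet> u = 0 \<Longrightarrow> norm (V *v z) \<le> \<mu> * norm z" and "\<mu> < l"
    and on_sphere: "\<And>i t. t \<ge> 0 \<Longrightarrow> norm (x i t) = 1"
    and ode: "\<And>i t. t \<ge> 0 \<Longrightarrow>
       ((x i) has_vector_derivative attn_field \<beta> V (\<lambda>j. x j t) i) (at t within {0..})"
    and init: "\<And>i. x i 0 \<bullet> u < 0"
  shows "((\<lambda>t. x i t \<bullet> u) \<longlongrightarrow> -1) at_top"
proof -
  define p where "p i t = - (x i t \<bullet> u)" for i t
  define D where "D i t = - (attn_field \<beta> V (\<lambda>j. x j t) i \<bullet> u)" for i t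
  have deriv_within: "(p i has_real_derivative D i t) (at t within {0..})" if "0 \<le> t" for i t
  proof -
    have "((\<lambda>s. x i s \<bullet> u) has_vector_derivative attn_field \<beta> V (\<lambda>j. x j t) i \<bullet> u) (at t within {0..})"
      by (rule bounded_linear.has_vector_derivative[OF bounded_linear_inner_left ode[OF that]])
    then show ?thesis
      unfolding has_real_derivative_iff_has_vector_derivative p_def D_def
      by (rule has_vector_derivative_minus)
  qed
  have cont: "continuous_on {0..} (p i)" for i
    unfolding continuous_on_eq_continuous_within by (auto intro: DERIV_continuous[OF deriv_within])
  have deriv: "(p i has_real_derivative D i t) (at t)" if "0 < t" for i t
  proof -
    have "(p i has_real_derivative D i t) (at t within {0<..})"
      by (rule DERIV_subset[OF deriv_within]) (use that in auto)
    then show ?thesis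
      using that at_within_open[of t "{0<..}"] by simp
  qed
  have growth: "(l - \<mu>) * p i t * (1 - (p i t)\<^sup>2) \<le> D i t"
    if "0 < t" "0 \<le> p i t" "\<And>j. p i t \<le> p j t" for i t
    using attn_field_alignment_ge[OF sym u eigen gap, of "\<lambda>j. x j t" i \<beta>] \<open>\<mu> < l\<close> that on_sphere
    by (simp add: p_def D_def)
  have "((\<lambda>t. p i t) \<longlongrightarrow> 1) at_top"
  proof (rule order_tendstoI)
    show "\<forall>\<^sub>F t in at_top. L < p i t" if "L < 1" for L
      using logistic_min_eventually_above[of "l - \<mu>" p D] \<open>\<mu> < l\<close> cont deriv growth init that
      by (simp add: p_def)
    have le_one: "p i t \<le> 1" if "0 \<le> t" for t
      using Cauchy_Schwarz_ineq2[of "x i t" u] on_sphere[OF that] u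
      by (simp add: p_def norm_eq_sqrt_inner)
    show "\<forall>\<^sub>F t in at_top. p i t < L" if "1 < L" for L
      using eventually_ge_at_top[of 0] by eventually_elim (use le_one that in force)
  qed
  from tendsto_minus[OF this] show ?thesis
    by (simp add: p_def)
qed

theorem corollary6p2:
  fixes \<beta> :: real
    and V :: "real ^ 'd ^ 'd"
    and e :: "'d \<Rightarrow> real ^ 'd"
    and lam :: "'d \<Rightarrow> real"
    and k1 :: 'd
    and x :: "'n::finite \<Rightarrow> real \<Rightarrow> real ^ 'd"
    and \<delta> :: real
  assumes beta_pos: "\<beta> > 0"
    and V_sym: "transpose V = V"
    and e_orthonormal: "\<And>k l. e k \<bullet> e l = (if k = l then 1 else 0)"
    and e_eigen: "\<And>k. V *v e k = lam k *\<^sub>R e k"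
    and spectral_gap: "\<And>k. k \<noteq> k1 \<Longrightarrow> lam k1 > \<bar>lam k\<bar>"
    and on_sphere: "\<And>i t. t \<ge> 0 \<Longrightarrow> norm (x i t) = 1"
    and ode: "\<And>i t. t \<ge> 0 \<Longrightarrow>
       ((x i) has_vector_derivative attn_field \<beta> V (\<lambda>j. x j t) i) (at t within {0..})"
    and delta_pos: "\<delta> > 0"
    and init: "\<And>i. x i 0 \<bullet> e k1 \<le> - \<delta>"
  shows "\<forall>i. ((x i) \<longlongrightarrow> - e k1) at_top"
proof
  fix i
  \<comment> \<open>The entry \<open>lam k1 - 1\<close> keeps the set nonempty when \<open>k1\<close> is the only index.\<close>
  define \<mu> where "\<mu> = Max (insert (lam k1 - 1) ((\<lambda>k. \<bar>lam k\<bar>) ` {k. k \<noteq> k1}))"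
  have "\<mu> < lam k1"
    by (simp add: \<mu>_def spectral_gap)
  have gap: "norm (V *v z) \<le> \<mu> * norm z" if "z \<bullet> e k1 = 0" for z
    by (rule norm_matrix_vector_orthogonal_eigen_le[OF e_orthonormal e_eigen _ that])
       (auto simp: \<mu>_def)
  have unit: "e k1 \<bullet> e k1 = 1"
    using e_orthonormal by simp
  have "x j 0 \<bullet> e k1 < 0" for j
    using init[of j] delta_pos by linarith
  then have "((\<lambda>t. x i t \<bullet> e k1) \<longlongrightarrow> -1) at_top"
    using attn_flow_aligns_with_top_eigenvector[OF V_sym unit e_eigen gap \<open>\<mu> < lam k1\<close> on_sphere ode]
    by blast
  then have inner: "((\<lambda>t. x i t \<bullet> - e k1) \<longlongrightarrow> 1) at_top"
    using tendsto_minus by force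
  have sphere: "\<forall>\<^sub>F t in at_top. norm (x i t) = 1"
    using eventually_ge_at_top[of 0] by eventually_elim (rule on_sphere)
  show "((x i) \<longlongrightarrow> - e k1) at_top"
    by (rule tendsto_unit_if_inner_tendsto_one[OF sphere _ inner]) (simp add: norm_eq_1 unit)
qed

end
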